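(* Every classical knot $K$ can be represented on a virtual row mosaic (a $1\times n$ virtual rectangular mosaic for some $n$) whose closure surface has genus zero.
   Context: Mosaic tiles are the eleven standard unit-square tiles $T_0,\dots,T_{10}$ ($T_0$ blank; $T_1,\dots,T_8$ non-crossing tiles with one or two arcs; $T_9,T_{10}$ the two crossing tiles, each containing a horizontal and a vertical strand crossing at the center). A virtual rectangular mosaic is an $m\times n$ array of tiles together with a pairing (with orientation) of the $2(m+n)$ boundary unit edges such that the quotient is a closed orientable surface $\Sigma_D$ carrying a knot diagram $D$; its genus is the genus of $\Sigma_D$ (for $m\times n$ with $v_D$ vertex classes after identification, $g(D)=(1-v_D+m+n)/2$). A genus zero mosaic thus gives a diagram on the sphere, i.e. a classical knot diagram. A row mosaic is a $1\times n$ virtual rectangular mosaic. *)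

theory Defs
  imports Main
begin

datatype side = N | E | S | W

text \<open>T0 blank; T1..T4 single corner arcs;
  T5 horizontal, T6 vertical straight strand; T7, T8 double-arc tiles;
  T9, T10 crossing tiles (T9: horizontal strand over, T10: vertical strand over).\<close>
datatype tile = T0 | T1 | T2 | T3 | T4 | T5 | T6 | T7 | T8 | T9 | T10

text \<open>conn t s: the other endpoint (side) of the strand of tile t that ends at the
  midpoint of side s, if any.\<close>
fun conn :: "tile \<Rightarrow> side \<Rightarrow> side option" where
  "conn T1 N = Some W" | "conn T1 W = Some N"
| "conn T2 N = Some E" | "conn T2 E = Some N"
| "conn T3 E = Some S" | "conn T3 S = Some E"
| "conn T4 S = Some W" | "conn T4 W = Some S"
| "conn T5 W = Some E" | "conn T5 E = Some W"
| "conn T6 N = Some S" | "conn T6 S = Some N"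
| "conn T7 N = Some W" | "conn T7 W = Some N" | "conn T7 E = Some S" | "conn T7 S = Some E"
| "conn T8 N = Some E" | "conn T8 E = Some N" | "conn T8 S = Some W" | "conn T8 W = Some S"
| "conn T9 W = Some E" | "conn T9 E = Some W" | "conn T9 N = Some S" | "conn T9 S = Some N"
| "conn T10 W = Some E" | "conn T10 E = Some W" | "conn T10 N = Some S" | "conn T10 S = Some N"
| "conn _ _ = None"

definition crossing_tile :: "tile \<Rightarrow> bool" where
  "crossing_tile t \<longleftrightarrow> t = T9 \<or> t = T10"

definition over_at :: "tile \<Rightarrow> side \<Rightarrow> bool" where
  "over_at t s \<longleftrightarrow> (t = T9 \<and> (s = W \<or> s = E)) \<or> (t = T10 \<and> (s = N \<or> s = S))"

text \<open>An m x n mosaic: cell (i,j), row i (counted from the bottom, i < m),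
  column j (j < n), occupying [j,j+1] x [i,i+1]. A port is a cell together with a side.\<close>
type_synonym port = "nat \<times> nat \<times> side"
type_synonym mtiles = "nat \<Rightarrow> nat \<Rightarrow> tile"

definition valid_port :: "nat \<Rightarrow> nat \<Rightarrow> port \<Rightarrow> bool" where
  "valid_port m n q = (case q of (i,j,s) \<Rightarrow> i < m \<and> j < n)"

definition is_boundary :: "nat \<Rightarrow> nat \<Rightarrow> port \<Rightarrow> bool" where
  "is_boundary m n q = (case q of (i,j,s) \<Rightarrow>
     (s = S \<and> i = 0) \<or> (s = N \<and> i = m - 1) \<or> (s = W \<and> j = 0) \<or> (s = E \<and> j = n - 1))"

text \<open>The 2(m+n) boundary unit edges are numbered 0..2(m+n)-1 counterclockwise starting
  at the lower left corner; edge k runs from boundary vertex k to boundary vertex k+1 (mod 2(m+n)).\<close>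
definition bport :: "nat \<Rightarrow> nat \<Rightarrow> nat \<Rightarrow> port" where
  "bport m n k =
     (if k < n then (0, k, S)
      else if k < n + m then (k - n, n - 1, E)
      else if k < 2*n + m then (m - 1, n - 1 - (k - n - m), N)
      else (m - 1 - (k - 2*n - m), 0, W))"

definition bidx :: "nat \<Rightarrow> nat \<Rightarrow> port \<Rightarrow> nat" where
  "bidx m n q = (case q of
       (i,j,S) \<Rightarrow> j
     | (i,j,E) \<Rightarrow> n + i
     | (i,j,N) \<Rightarrow> n + m + (n - 1 - j)
     | (i,j,W) \<Rightarrow> 2*n + m + (m - 1 - i))"

definition nbr :: "nat \<Rightarrow> nat \<Rightarrow> (nat \<Rightarrow> nat) \<Rightarrow> port \<Rightarrow> port" where
  "nbr m n p q =
     (if is_boundary m n q then bport m n (p (bidx m n q))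
      else (case q of
         (i,j,N) \<Rightarrow> (i+1, j, S)
       | (i,j,S) \<Rightarrow> (i-1, j, N)
       | (i,j,E) \<Rightarrow> (i, j+1, W)
       | (i,j,W) \<Rightarrow> (i, j-1, E)))"

definition has_end :: "mtiles \<Rightarrow> port \<Rightarrow> bool" where
  "has_end T q = (case q of (i,j,s) \<Rightarrow> conn (T i j) s \<noteq> None)"

text \<open>Virtual rectangular mosaic: a fixed-point-free involutive pairing of the 2(m+n)
  boundary edges (each pair glued reversing the boundary orientation, which is exactly the
  condition for the quotient of the rectangle to be orientable), such that the tiles are
  suitably connected across interior edges and across glued boundary edges.\<close>
definition virtual_mosaic :: "nat \<Rightarrow> nat \<Rightarrow> mtiles \<Rightarrow> (nat \<Rightarrow> nat) \<Rightarrow> bool" where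
  "virtual_mosaic m n T p \<longleftrightarrow>
     0 < m \<and> 0 < n \<and>
     (\<forall>k < 2*(m+n). p k < 2*(m+n) \<and> p k \<noteq> k \<and> p (p k) = k) \<and>
     (\<forall>q. valid_port m n q \<longrightarrow> (has_end T q \<longleftrightarrow> has_end T (nbr m n p q)))"

definition classical_mosaic :: "nat \<Rightarrow> nat \<Rightarrow> mtiles \<Rightarrow> bool" where
  "classical_mosaic m n T \<longleftrightarrow>
     0 < m \<and> 0 < n \<and>
     (\<forall>q. valid_port m n q \<and> is_boundary m n q \<longrightarrow> \<not> has_end T q) \<and>
     (\<forall>q. valid_port m n q \<and> \<not> is_boundary m n q \<longrightarrow> (has_end T q \<longleftrightarrow> has_end T (nbr m n id q)))"

text \<open>Vertex classes of the quotient: boundary vertex k is identified with the end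
  vertex of the paired edge p k, i.e. with vertex (p k + 1) mod 2(m+n).\<close>
definition vert_rel :: "nat \<Rightarrow> nat \<Rightarrow> (nat \<Rightarrow> nat) \<Rightarrow> (nat \<times> nat) set" where
  "vert_rel m n p = (let R = {(k, Suc (p k) mod (2*(m+n))) | k. k < 2*(m+n)} in (R \<union> R\<inverse>)\<^sup>*)"

definition num_vertices :: "nat \<Rightarrow> nat \<Rightarrow> (nat \<Rightarrow> nat) \<Rightarrow> nat" where
  "num_vertices m n p = card ({0..<2*(m+n)} // vert_rel m n p)"

definition mosaic_genus :: "nat \<Rightarrow> nat \<Rightarrow> (nat \<Rightarrow> nat) \<Rightarrow> int" where
  "mosaic_genus m n p = (1 - int (num_vertices m n p) + int m + int n) div 2"

definition exitp :: "mtiles \<Rightarrow> port \<Rightarrow> port" where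
  "exitp T q = (case q of (i,j,s) \<Rightarrow> (i, j, the (conn (T i j) s)))"

definition step :: "nat \<Rightarrow> nat \<Rightarrow> mtiles \<Rightarrow> (nat \<Rightarrow> nat) \<Rightarrow> port \<Rightarrow> port" where
  "step m n T p q = nbr m n p (exitp T q)"

definition ends :: "nat \<Rightarrow> nat \<Rightarrow> mtiles \<Rightarrow> port set" where
  "ends m n T = {q. valid_port m n q \<and> has_end T q}"

text \<open>The diagram is a knot: nonempty and a single closed curve.\<close>
definition one_component :: "nat \<Rightarrow> nat \<Rightarrow> mtiles \<Rightarrow> (nat \<Rightarrow> nat) \<Rightarrow> bool" where
  "one_component m n T p \<longleftrightarrow> ends m n T \<noteq> {} \<and>
     (\<exists>q \<in> ends m n T. \<forall>x \<in> ends m n T. \<exists>k. (step m n T p ^^ k) q \<in> {x, exitp T x})"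

text \<open>A letter: (crossing label, passes over?, crossing sign positive?).\<close>
type_synonym letter = "nat \<times> bool \<times> bool"

definition orbit_of :: "nat \<Rightarrow> nat \<Rightarrow> mtiles \<Rightarrow> (nat \<Rightarrow> nat) \<Rightarrow> port \<Rightarrow> port set" where
  "orbit_of m n T p q = range (\<lambda>k. (step m n T p ^^ k) q)"

text \<open>Sign of crossing cell (i,j) for the orientation of the traversal with orbit Orb:
  horizontal strand runs in +x direction iff entered from W, vertical in +y iff entered from S;
  the crossing is positive iff cross(d_over, d_under) > 0.\<close>
definition cross_sign :: "mtiles \<Rightarrow> port set \<Rightarrow> nat \<Rightarrow> nat \<Rightarrow> bool" where
  "cross_sign T Orb i j =
     (let hd = ((i,j,W) \<in> Orb); vd = ((i,j,S) \<in> Orb) in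
      if T i j = T9 then hd = vd else hd \<noteq> vd)"

definition gauss_code :: "nat \<Rightarrow> nat \<Rightarrow> mtiles \<Rightarrow> (nat \<Rightarrow> nat) \<Rightarrow> port \<Rightarrow> letter list" where
  "gauss_code m n T p q =
     (let L = (LEAST k. 0 < k \<and> (step m n T p ^^ k) q = q);
          Orb = orbit_of m n T p q in
      concat (map (\<lambda>k. case (step m n T p ^^ k) q of (i,j,s) \<Rightarrow>
                 if crossing_tile (T i j) then [(i*n+j, over_at (T i j) s, cross_sign T Orb i j)] else [])
              [0..<L]))"

text \<open>All Gauss codes of the diagram (all starting points and both orientations).\<close>
definition gauss_codes :: "nat \<Rightarrow> nat \<Rightarrow> mtiles \<Rightarrow> (nat \<Rightarrow> nat) \<Rightarrow> letter list set" where
  "gauss_codes m n T p = gauss_code m n T p ` ends m n T"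

definition r3_triple :: "letter list \<Rightarrow> letter list \<Rightarrow> letter list \<Rightarrow> bool" where
  "r3_triple P1 P2 P3 \<longleftrightarrow> (\<exists>a b c sa sb sc t mm bt.
     distinct [a,b,c] \<and>
     {P1,P2,P3} =
       {(if t then [(a,True,sa),(b,True,sb)] else [(b,True,sb),(a,True,sa)]),
        (if mm then [(a,False,sa),(c,True,sc)] else [(c,True,sc),(a,False,sa)]),
        (if bt then [(b,False,sb),(c,False,sc)] else [(c,False,sc),(b,False,sb)])} \<and>
     (sa = (t = mm)) = (sb = (t = bt)) \<and> (sb = (t = bt)) = (sc = (mm = bt)))"

inductive gstep :: "letter list \<Rightarrow> letter list \<Rightarrow> bool" where
  rot: "gstep w (rotate1 w)"
| relabel: "inj_on f (fst ` set w) \<Longrightarrow> gstep w (map (\<lambda>(c,ov,s). (f c, ov, s)) w)"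
| r1: "a \<notin> fst ` set (u @ v) \<Longrightarrow> gstep (u @ v) (u @ [(a,ov,s),(a,\<not>ov,s)] @ v)"
| r2: "a \<notin> fst ` set (u1 @ u2 @ u3) \<Longrightarrow> b \<notin> fst ` set (u1 @ u2 @ u3) \<Longrightarrow> a \<noteq> b \<Longrightarrow>
       Y \<in> {[(a,\<not>ov,s),(b,\<not>ov,\<not>s)], [(b,\<not>ov,\<not>s),(a,\<not>ov,s)]} \<Longrightarrow>
       gstep (u1 @ u2 @ u3) (u1 @ [(a,ov,s),(b,ov,\<not>s)] @ u2 @ Y @ u3)"
| r3: "r3_triple [x1,y1] [x2,y2] [x3,y3] \<Longrightarrow>
       gstep (u1 @ [x1,y1] @ u2 @ [x2,y2] @ u3 @ [x3,y3] @ u4)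
             (u1 @ [y1,x1] @ u2 @ [y2,x2] @ u3 @ [y3,x3] @ u4)"

definition gauss_equiv :: "letter list \<Rightarrow> letter list \<Rightarrow> bool" where
  "gauss_equiv = (\<lambda>x y. gstep x y \<or> gstep y x)\<^sup>*\<^sup>*"

end

theory Submission
  imports Defs
begin

(* Lay the m rows of the classical mosaic side by side in a single row of length
  Z = m(2n+1): cell (i,j) goes to column i(2n+1)+j, so every row is followed by n+1 blank
  tiles. Horizontal adjacencies survive unchanged; the vertical adjacency of (i,j) and
  (i+1,j) is recovered by gluing the top edge of column k to the bottom edge of column
  k+2n+1. The remaining boundary edges carry no strands and are glued in a nested way: the
  bottom edges of the first 2n columns among themselves, the right edge and the top edges of
  the last 2n+1 columns among themselves, and the bottom edge of column 2n to the left edge.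
  The traversal of the row diagram is the image of the original one, so its Gauss code is
  the original code with the crossings relabelled. The induced identification of the 2Z+2
  boundary vertices is an involution with exactly two fixed points, so there are Z+2
  vertices and the genus is (1 - (Z+2) + 1 + Z)/2 = 0. *)

lemma rtrancl_involution_graph:
  assumes "\<And>x. x \<in> A \<Longrightarrow> f x \<in> A \<and> f (f x) = x"
  defines "G \<equiv> {(x, f x) | x. x \<in> A}"
  shows "(G \<union> G\<inverse>)\<^sup>* = Id \<union> G"
proof -
  have "(x, y) \<in> G \<longleftrightarrow> x \<in> A \<and> y = f x" for x y
    by (auto simp: G_def)
  then have "G\<inverse> = G" and "trans (Id \<union> G)"
    using assms(1) by (auto simp: trans_def)
  then have "(G \<union> G\<inverse>)\<^sup>* = (Id \<union> G)\<^sup>*"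
    by (simp add: sup_commute)
  also have "\<dots> = ((Id \<union> G)\<^sup>+)\<^sup>="
    by (rule rtrancl_trancl_reflcl)
  also have "\<dots> = Id \<union> G"
    using \<open>trans (Id \<union> G)\<close> by (auto simp: trancl_id)
  finally show ?thesis .
qed

lemma card_quotient_involution:
  assumes inv: "\<And>x. x \<in> A \<Longrightarrow> f x \<in> A \<and> f (f x) = x"
    and reps: "B \<subseteq> A" "A \<subseteq> B \<union> f ` B"
    and no_pair: "\<And>x. x \<in> B \<Longrightarrow> f x \<in> B \<Longrightarrow> f x = x"
  shows "card (A // (Id \<union> {(x, f x) | x. x \<in> A})) = card B"
proof -
  define orbit where "orbit x = {x, f x}" for x
  have "A // (Id \<union> {(x, f x) | x. x \<in> A}) = orbit ` A"
    using inv by (auto simp: quotient_def orbit_def)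
  also have "\<dots> = orbit ` B"
    using inv reps by (fastforce simp: orbit_def insert_commute)
  also have "card \<dots> = card B"
  proof (rule card_image, rule inj_onI)
    fix x y assume "x \<in> B" "y \<in> B" "orbit x = orbit y"
    then show "x = y"
      using inv no_pair reps(1) by (auto simp: orbit_def doubleton_eq_iff)
  qed
  finally show ?thesis .
qed

lemma conn_sym: "conn t s = Some s' \<Longrightarrow> conn t s' = Some s"
  by (cases t; cases s; auto)

lemma exitp_in_ends:
  assumes "q \<in> ends m n T"
  shows "exitp T q \<in> ends m n T"
proof -
  obtain i j s where q: "q = (i, j, s)" by (cases q)
  with assms obtain s' where "conn (T i j) s = Some s'"
    by (auto simp: ends_def has_end_def)
  with assms q show ?thesis
    by (auto simp: ends_def has_end_def exitp_def valid_port_def dest: conn_sym)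
qed

lemma classical_end_not_boundary:
  assumes "classical_mosaic m n T" "q \<in> ends m n T"
  shows "\<not> is_boundary m n q"
  using assms by (cases q) (auto simp: classical_mosaic_def ends_def)

lemma classical_nbr_in_ends:
  assumes cl: "classical_mosaic m n T" and q: "q \<in> ends m n T"
  shows "nbr m n id q \<in> ends m n T"
proof -
  have interior: "\<not> is_boundary m n q"
    using classical_end_not_boundary[OF assms] .
  then have "valid_port m n (nbr m n id q)"
    using q by (cases q; cases "snd (snd q)")
      (auto simp: nbr_def is_boundary_def valid_port_def ends_def)
  moreover have "has_end T (nbr m n id q)"
    using cl q interior by (cases q) (auto simp: classical_mosaic_def ends_def simp del: id_apply)
  ultimately show ?thesis by (simp add: ends_def)
qed

lemma classical_funpow_step_in_ends:
  assumes "classical_mosaic m n T" "q \<in> ends m n T"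
  shows "(step m n T id ^^ k) q \<in> ends m n T"
  using assms(2)
  by (induction k) (auto simp: step_def intro: classical_nbr_in_ends[OF assms(1)] exitp_in_ends)

definition row_stride :: "nat \<Rightarrow> nat" where
  "row_stride n = 2 * n + 1"

definition row_length :: "nat \<Rightarrow> nat \<Rightarrow> nat" where
  "row_length m n = m * row_stride n"

definition row_tiles :: "nat \<Rightarrow> nat \<Rightarrow> mtiles \<Rightarrow> mtiles" where
  "row_tiles m n T = (\<lambda>_ k.
     if k div row_stride n < m \<and> k mod row_stride n < n
     then T (k div row_stride n) (k mod row_stride n) else T0)"

definition row_port :: "nat \<Rightarrow> port \<Rightarrow> port" where
  "row_port n q = (case q of (i, j, s) \<Rightarrow> (0, i * row_stride n + j, s))"

(* In the boundary numbering of bport, for 2n < a < row_length m n the last branch glues the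
  bottom edge of column a to the top edge of column a - (2n+1). *)
definition row_pairing :: "nat \<Rightarrow> nat \<Rightarrow> nat \<Rightarrow> nat" where
  "row_pairing m n a =
     (if a < 2 * n then 2 * n - 1 - a
      else if a = 2 * n then 2 * row_length m n + 1
      else 2 * row_length m n + 2 * n + 1 - a)"

lemma row_stride_div_mod:
  assumes "j < n"
  shows "(i * row_stride n + j) div row_stride n = i \<and> (i * row_stride n + j) mod row_stride n = j"
proof -
  have "j < row_stride n"
    using assms by (simp add: row_stride_def)
  then show ?thesis by simp
qed

lemma row_tiles_row_port:
  "i < m \<Longrightarrow> j < n \<Longrightarrow> row_tiles m n T i' (i * row_stride n + j) = T i j"
  using row_stride_div_mod[of j n i] by (simp add: row_tiles_def)

lemma has_end_row_port:
  "valid_port m n q \<Longrightarrow> has_end (row_tiles m n T) (row_port n q) = has_end T q"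
  by (cases q) (simp add: has_end_def row_port_def valid_port_def row_tiles_row_port)

lemma exitp_row_port:
  "valid_port m n q \<Longrightarrow> exitp (row_tiles m n T) (row_port n q) = row_port n (exitp T q)"
  by (cases q) (simp add: exitp_def row_port_def valid_port_def row_tiles_row_port)

lemma row_offset_bound:
  assumes "i < m" "j < row_stride n"
  shows "i * row_stride n + j < row_length m n"
proof -
  have "i * row_stride n + j < (i + 1) * row_stride n"
    using assms(2) by simp
  also have "\<dots> \<le> m * row_stride n"
    using assms(1) by (intro mult_le_mono1) simp
  finally show ?thesis
    by (simp add: row_length_def)
qed

lemma valid_row_port: "valid_port m n q \<Longrightarrow> valid_port 1 (row_length m n) (row_port n q)"
  by (cases q) (auto simp: valid_port_def row_port_def intro!: row_offset_bound,
      simp add: row_stride_def)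

lemma inj_on_row_port: "inj_on (row_port n) {q. valid_port m n q}"
  by (rule inj_onI) (auto simp: row_port_def valid_port_def, (metis row_stride_div_mod)+)

lemma row_stride_le_row_length: "0 < m \<Longrightarrow> row_stride n \<le> row_length m n"
  by (simp add: row_length_def)

lemma row_pairing_involution:
  assumes "0 < m" "a < 2 * (1 + row_length m n)"
  shows "row_pairing m n a < 2 * (1 + row_length m n) \<and> row_pairing m n a \<noteq> a
         \<and> row_pairing m n (row_pairing m n a) = a"
proof -
  define Z where "Z = row_length m n"
  have Z: "2 * n + 1 \<le> Z"
    using row_stride_le_row_length[OF assms(1)] by (simp add: Z_def row_stride_def)
  have "a < 2 * n \<or> a = 2 * n \<or> 2 * n < a \<and> a < 2 * Z + 1 \<or> a = 2 * Z + 1"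
    using assms(2) unfolding Z_def by auto
  then consider "a < 2 * n" | "a = 2 * n" | "2 * n < a" "a < 2 * Z + 1" | "a = 2 * Z + 1"
    by blast
  then show ?thesis
  proof cases
    case 1
    moreover have "2 * n - 1 - a \<noteq> a"
      using 1 by presburger
    ultimately show ?thesis
      using Z by (simp add: row_pairing_def Z_def[symmetric])
  next
    case 3
    moreover have "2 * Z + 2 * n + 1 - a \<noteq> a"
      by presburger
    ultimately show ?thesis
      using Z by (auto simp: row_pairing_def Z_def[symmetric])
  qed (use Z in \<open>simp_all add: row_pairing_def Z_def[symmetric]\<close>)
qed

lemma nbr_row_N:
  assumes "k + row_stride n < row_length m n"
  shows "nbr 1 (row_length m n) (row_pairing m n) (0, k, N) = (0, k + row_stride n, S)"
  using assms
  by (auto simp: nbr_def is_boundary_def bidx_def bport_def row_pairing_def row_stride_def)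

lemma nbr_row_S:
  assumes "row_stride n \<le> k" "k < row_length m n"
  shows "nbr 1 (row_length m n) (row_pairing m n) (0, k, S) = (0, k - row_stride n, N)"
  using assms
  by (auto simp: nbr_def is_boundary_def bidx_def bport_def row_pairing_def row_stride_def)

lemma nbr_row_E: "k + 1 < Z \<Longrightarrow> nbr 1 Z p (0, k, E) = (0, k + 1, W)"
  by (auto simp: nbr_def is_boundary_def)

lemma nbr_row_W: "0 < k \<Longrightarrow> nbr 1 Z p (0, k, W) = (0, k - 1, E)"
  by (simp add: nbr_def is_boundary_def)

lemma nbr_row_port:
  assumes cl: "classical_mosaic m n T" and q: "q \<in> ends m n T"
  shows "nbr 1 (row_length m n) (row_pairing m n) (row_port n q) = row_port n (nbr m n id q)"
proof -
  obtain i j s where qs: "q = (i, j, s)" by (cases q)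
  have interior: "\<not> is_boundary m n q"
    using classical_end_not_boundary[OF cl q] .
  have ij: "i < m" "j < n"
    using q qs by (auto simp: ends_def valid_port_def)
  have j_stride: "j < row_stride n"
    using ij(2) by (simp add: row_stride_def)
  show ?thesis
  proof (cases s)
    case N
    with interior qs ij have "i + 1 < m"
      by (auto simp: is_boundary_def)
    then have "i * row_stride n + j + row_stride n < row_length m n"
      using row_offset_bound[OF _ j_stride, of "i + 1"] by (simp add: algebra_simps)
    with qs N interior show ?thesis
      using nbr_row_N by (simp add: nbr_def[of m n] row_port_def algebra_simps)
  next
    case S
    with interior qs ij have "0 < i"
      by (auto simp: is_boundary_def)
    then have "row_stride n \<le> i * row_stride n + j"
      by (simp add: trans_le_add1)
    moreover have "i * row_stride n + j - row_stride n = (i - 1) * row_stride n + j"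
      using \<open>0 < i\<close> by (simp add: diff_mult_distrib)
    ultimately show ?thesis
      using qs S interior nbr_row_S row_offset_bound[OF ij(1) j_stride]
      by (simp add: nbr_def[of m n] row_port_def)
  next
    case E
    with interior qs ij have "j + 1 < n"
      by (auto simp: is_boundary_def)
    then have "i * row_stride n + j + 1 < row_length m n"
      using row_offset_bound[OF ij(1), of "j + 1"] by (simp add: row_stride_def)
    with qs E interior show ?thesis
      using nbr_row_E by (simp add: nbr_def[of m n] row_port_def)
  next
    case W
    with interior qs ij have "0 < j"
      by (auto simp: is_boundary_def)
    with qs W interior show ?thesis
      using nbr_row_W by (simp add: nbr_def[of m n] row_port_def)
  qed
qed

lemma step_row_port:
  assumes "classical_mosaic m n T" "q \<in> ends m n T"
  shows "step 1 (row_length m n) (row_tiles m n T) (row_pairing m n) (row_port n q)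
       = row_port n (step m n T id q)"
  using assms exitp_row_port[of m n q T] nbr_row_port[OF assms(1) exitp_in_ends[OF assms(2)]]
  by (simp add: step_def ends_def)

lemma funpow_step_row_port:
  assumes cl: "classical_mosaic m n T" and q: "q \<in> ends m n T"
  shows "(step 1 (row_length m n) (row_tiles m n T) (row_pairing m n) ^^ k) (row_port n q)
       = row_port n ((step m n T id ^^ k) q)"
proof (induction k)
  case (Suc k)
  then show ?case
    using step_row_port[OF cl classical_funpow_step_in_ends[OF cl q, of k]] by (simp add: id_def)
qed simp

lemma ends_row_tiles: "ends 1 (row_length m n) (row_tiles m n T) = row_port n ` ends m n T"
proof
  show "row_port n ` ends m n T \<subseteq> ends 1 (row_length m n) (row_tiles m n T)"
    using valid_row_port has_end_row_port by (fastforce simp: ends_def)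
next
  show "ends 1 (row_length m n) (row_tiles m n T) \<subseteq> row_port n ` ends m n T"
  proof
    fix q' assume q': "q' \<in> ends 1 (row_length m n) (row_tiles m n T)"
    then obtain k s where q'_eq: "q' = (0, k, s)"
      by (cases q') (auto simp: ends_def valid_port_def)
    define q where "q = (k div row_stride n, k mod row_stride n, s)"
    from q' q'_eq have "valid_port m n q"
      by (auto simp: ends_def has_end_def row_tiles_def q_def valid_port_def split: if_splits)
    moreover have "row_port n q = q'"
      using q'_eq by (simp add: q_def row_port_def)
    ultimately show "q' \<in> row_port n ` ends m n T"
      using q' has_end_row_port[of m n q T] by (auto simp: ends_def)
  qed
qed

lemma row_nbr_involution:
  assumes Z: "0 < Z" and p: "\<And>k. k < 2 * (1 + Z) \<Longrightarrow> p k < 2 * (1 + Z) \<and> p (p k) = k"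
    and q: "valid_port 1 Z q"
  shows "valid_port 1 Z (nbr 1 Z p q) \<and> nbr 1 Z p (nbr 1 Z p q) = q"
proof (cases "is_boundary 1 Z q")
  case True
  have bport_bidx: "bidx 1 Z q < 2 * (1 + Z) \<and> bport 1 Z (bidx 1 Z q) = q"
    using Z q True
    by (cases q; cases "snd (snd q)") (auto simp: bport_def valid_port_def is_boundary_def bidx_def)
  have bidx_bport: "valid_port 1 Z (bport 1 Z k) \<and> is_boundary 1 Z (bport 1 Z k) \<and> bidx 1 Z (bport 1 Z k) = k"
    if "k < 2 * (1 + Z)" for k
    using Z that by (auto simp: bport_def valid_port_def is_boundary_def bidx_def)
  show ?thesis
    using True bport_bidx bidx_bport p[of "bidx 1 Z q"] by (simp add: nbr_def)
next
  case False
  with q show ?thesis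
    by (cases q; cases "snd (snd q)") (auto simp: nbr_def is_boundary_def valid_port_def)
qed

lemma row_mosaic_virtual:
  assumes cl: "classical_mosaic m n T"
  shows "virtual_mosaic 1 (row_length m n) (row_tiles m n T) (row_pairing m n)"
proof -
  let ?Z = "row_length m n" and ?T = "row_tiles m n T" and ?p = "row_pairing m n"
  have mn: "0 < m" "0 < n"
    using cl by (auto simp: classical_mosaic_def)
  then have Z: "0 < ?Z"
    by (simp add: row_length_def row_stride_def)
  have forward: "has_end ?T (nbr 1 ?Z ?p q')"
    if "valid_port 1 ?Z q'" "has_end ?T q'" for q'
  proof -
    have "q' \<in> ends 1 ?Z ?T"
      using that by (simp add: ends_def)
    then obtain q where q: "q \<in> ends m n T" "q' = row_port n q"
      unfolding ends_row_tiles by blast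
    then show ?thesis
      using classical_nbr_in_ends[OF cl q(1)] ends_row_tiles[of m n T] nbr_row_port[OF cl q(1)]
      by (auto simp: ends_def)
  qed
  have "has_end ?T q' \<longleftrightarrow> has_end ?T (nbr 1 ?Z ?p q')" if "valid_port 1 ?Z q'" for q'
    using forward[OF that] forward[of "nbr 1 ?Z ?p q'"]
      row_nbr_involution[OF Z _ that, of ?p] row_pairing_involution[OF mn(1)]
    by auto
  then show ?thesis
    unfolding virtual_mosaic_def using mn Z row_pairing_involution[OF mn(1)] by auto
qed

lemma row_mosaic_one_component:
  assumes cl: "classical_mosaic m n T" and oc: "one_component m n T id"
  shows "one_component 1 (row_length m n) (row_tiles m n T) (row_pairing m n)"
proof -
  obtain q0 where q0: "q0 \<in> ends m n T"
    and reach: "\<And>x. x \<in> ends m n T \<Longrightarrow> \<exists>k. (step m n T id ^^ k) q0 \<in> {x, exitp T x}"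
    using oc unfolding one_component_def by blast
  have "\<exists>k. (step 1 (row_length m n) (row_tiles m n T) (row_pairing m n) ^^ k) (row_port n q0)
          \<in> {row_port n x, exitp (row_tiles m n T) (row_port n x)}"
    if x: "x \<in> ends m n T" for x
  proof -
    obtain k where "(step m n T id ^^ k) q0 \<in> {x, exitp T x}"
      using reach[OF x] by blast
    then show ?thesis
      using funpow_step_row_port[OF cl q0, of k] exitp_row_port[of m n x T] x
      by (auto simp: ends_def)
  qed
  then show ?thesis
    unfolding one_component_def ends_row_tiles using q0 by blast
qed

definition row_vertex_partner :: "nat \<Rightarrow> nat \<Rightarrow> nat \<Rightarrow> nat" where
  "row_vertex_partner m n k =
     (if k \<le> 2 * n then 2 * n - k else 2 * row_length m n + 2 * n + 2 - k)"

lemma row_vertex_partner_eq: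
  assumes "0 < m" "k < 2 * (1 + row_length m n)"
  shows "Suc (row_pairing m n k) mod (2 * (1 + row_length m n)) = row_vertex_partner m n k"
proof -
  have "2 * n + 1 \<le> row_length m n"
    using row_stride_le_row_length[OF assms(1)] by (simp add: row_stride_def)
  then show ?thesis
    using assms(2) by (auto simp: row_pairing_def row_vertex_partner_def)
qed

lemma row_vertex_partner_involution:
  assumes "0 < m" "k < 2 * (1 + row_length m n)"
  shows "row_vertex_partner m n k < 2 * (1 + row_length m n)
         \<and> row_vertex_partner m n (row_vertex_partner m n k) = k"
proof -
  have "2 * n + 1 \<le> row_length m n"
    using row_stride_le_row_length[OF assms(1)] by (simp add: row_stride_def)
  then show ?thesis
    using assms(2) by (auto simp: row_vertex_partner_def)
qed

lemma vert_rel_row_pairing: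
  assumes "0 < m"
  shows "vert_rel 1 (row_length m n) (row_pairing m n)
       = Id \<union> {(k, row_vertex_partner m n k) | k. k \<in> {0..<2 * (1 + row_length m n)}}"
proof -
  have "{(k, Suc (row_pairing m n k) mod (2 * (1 + row_length m n))) | k. k < 2 * (1 + row_length m n)}
      = {(k, row_vertex_partner m n k) | k. k \<in> {0..<2 * (1 + row_length m n)}}"
    using row_vertex_partner_eq[OF assms] by force
  then show ?thesis
    unfolding vert_rel_def Let_def
    using rtrancl_involution_graph[of "{0..<2 * (1 + row_length m n)}" "row_vertex_partner m n"]
      row_vertex_partner_involution[OF assms]
    by simp
qed

lemma num_vertices_row_pairing:
  assumes "0 < m"
  shows "num_vertices 1 (row_length m n) (row_pairing m n) = row_length m n + 2"
proof -
  let ?Z = "row_length m n" and ?f = "row_vertex_partner m n"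
  have Z: "2 * n + 1 \<le> ?Z"
    using row_stride_le_row_length[OF assms(1)] by (simp add: row_stride_def)
  define B where "B = {0..n} \<union> {2 * n + 1..?Z + n + 1}"
  have "card ({0..<2 * (1 + ?Z)} // vert_rel 1 ?Z (row_pairing m n)) = card B"
    unfolding vert_rel_row_pairing[OF assms]
  proof (rule card_quotient_involution)
    show "?f x \<in> {0..<2 * (1 + ?Z)} \<and> ?f (?f x) = x" if "x \<in> {0..<2 * (1 + ?Z)}" for x
      using row_vertex_partner_involution[OF assms] that by simp
    show "B \<subseteq> {0..<2 * (1 + ?Z)}"
      using Z by (auto simp: B_def)
    show "{0..<2 * (1 + ?Z)} \<subseteq> B \<union> ?f ` B"
    proof
      fix x assume x: "x \<in> {0..<2 * (1 + ?Z)}"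
      show "x \<in> B \<union> ?f ` B"
      proof (cases "x \<in> B")
        case False
        then have "?f x \<in> B"
          using x Z by (auto simp: B_def row_vertex_partner_def)
        then show ?thesis
          using row_vertex_partner_involution[OF assms, of x] x by (metis UnI2 atLeastLessThan_iff image_eqI)
      qed simp
    qed
    show "?f x = x" if "x \<in> B" "?f x \<in> B" for x
      using that Z by (auto simp: B_def row_vertex_partner_def)
  qed
  also have "card B = ?Z + 2"
    using Z by (simp add: B_def card_Un_disjoint)
  finally show ?thesis
    by (simp add: num_vertices_def)
qed

lemma row_mosaic_genus:
  assumes "0 < m"
  shows "mosaic_genus 1 (row_length m n) (row_pairing m n) = 0"
  unfolding mosaic_genus_def num_vertices_row_pairing[OF assms] by simp

definition row_label :: "nat \<Rightarrow> nat \<Rightarrow> nat" where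
  "row_label n c = c div n * row_stride n + c mod n"

lemma inj_row_label:
  assumes "0 < n"
  shows "inj (row_label n)"
proof (rule injI)
  fix x y assume "row_label n x = row_label n y"
  then have "x div n = y div n \<and> x mod n = y mod n"
    using assms row_stride_div_mod[of "x mod n" n "x div n"] row_stride_div_mod[of "y mod n" n "y div n"]
    unfolding row_label_def by (metis mod_less_divisor)
  then show "x = y"
    by (metis div_mult_mod_eq)
qed

lemma orbit_of_row_port:
  assumes "classical_mosaic m n T" "q \<in> ends m n T"
  shows "orbit_of 1 (row_length m n) (row_tiles m n T) (row_pairing m n) (row_port n q)
       = row_port n ` orbit_of m n T id q"
  unfolding orbit_of_def using funpow_step_row_port[OF assms] by (auto simp: image_image)

definition crossing_letters :: "nat \<Rightarrow> mtiles \<Rightarrow> port set \<Rightarrow> port \<Rightarrow> letter list" where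
  "crossing_letters n T Orb q = (case q of (i, j, s) \<Rightarrow>
     if crossing_tile (T i j) then [(i * n + j, over_at (T i j) s, cross_sign T Orb i j)] else [])"

lemma gauss_code_crossing_letters:
  "gauss_code m n T p q = concat (map (\<lambda>k. crossing_letters n T (orbit_of m n T p q) ((step m n T p ^^ k) q))
     [0..<LEAST k. 0 < k \<and> (step m n T p ^^ k) q = q])"
  by (simp add: gauss_code_def crossing_letters_def Let_def)

lemma cross_sign_row_port:
  assumes "Orb \<subseteq> {q. valid_port m n q}" "i < m" "j < n"
  shows "cross_sign (row_tiles m n T) (row_port n ` Orb) 0 (i * row_stride n + j) = cross_sign T Orb i j"
proof -
  have "(0, i * row_stride n + j, s) \<in> row_port n ` Orb \<longleftrightarrow> (i, j, s) \<in> Orb" for s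
    using inj_on_image_mem_iff[OF inj_on_row_port _ assms(1), of "(i, j, s)"] assms(2,3)
    by (simp add: row_port_def valid_port_def)
  then show ?thesis
    using row_tiles_row_port[OF assms(2,3)] by (simp add: cross_sign_def)
qed

lemma crossing_letters_row_port:
  assumes "Orb \<subseteq> {q. valid_port m n q}" "valid_port m n x"
  shows "crossing_letters (row_length m n) (row_tiles m n T) (row_port n ` Orb) (row_port n x)
       = map (\<lambda>(c, ov, s). (row_label n c, ov, s)) (crossing_letters n T Orb x)"
proof -
  obtain i j s where x: "x = (i, j, s)" and ij: "i < m" "j < n"
    using assms(2) by (cases x) (auto simp: valid_port_def)
  then have "row_label n (i * n + j) = i * row_stride n + j"
    by (simp add: row_label_def)
  then show ?thesis
    using x row_tiles_row_port[OF ij, of T 0] cross_sign_row_port[OF assms(1) ij, of T]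
    by (simp add: crossing_letters_def row_port_def)
qed

lemma gauss_code_row_port:
  assumes cl: "classical_mosaic m n T" and q: "q \<in> ends m n T"
  shows "gauss_code 1 (row_length m n) (row_tiles m n T) (row_pairing m n) (row_port n q)
       = map (\<lambda>(c, ov, s). (row_label n c, ov, s)) (gauss_code m n T id q)"
proof -
  let ?step = "step 1 (row_length m n) (row_tiles m n T) (row_pairing m n)"
  have valid_iter: "valid_port m n ((step m n T id ^^ k) q)" for k
    using classical_funpow_step_in_ends[OF cl q] by (simp add: ends_def)
  have "(?step ^^ k) (row_port n q) = row_port n q \<longleftrightarrow> (step m n T id ^^ k) q = q" for k
    unfolding funpow_step_row_port[OF cl q]
    using inj_on_eq_iff[OF inj_on_row_port, of "(step m n T id ^^ k) q" m n q] valid_iter q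
    by (simp add: ends_def)
  then have period: "(LEAST k. 0 < k \<and> (?step ^^ k) (row_port n q) = row_port n q)
                   = (LEAST k. 0 < k \<and> (step m n T id ^^ k) q = q)"
    by simp
  have "orbit_of m n T id q \<subseteq> {q. valid_port m n q}"
    unfolding orbit_of_def using valid_iter by auto
  then show ?thesis
    unfolding gauss_code_crossing_letters period orbit_of_row_port[OF cl q]
    by (simp add: map_concat comp_def funpow_step_row_port[OF cl q] crossing_letters_row_port valid_iter
        del: One_nat_def)
qed

theorem mainTheorem4:
  assumes "classical_mosaic m n T" and "one_component m n T id"
  shows "\<exists>n' T' p'. virtual_mosaic 1 n' T' p' \<and> one_component 1 n' T' p' \<and>
           mosaic_genus 1 n' p' = 0 \<and>
           (\<exists>w \<in> gauss_codes m n T id. \<exists>w' \<in> gauss_codes 1 n' T' p'. gauss_equiv w w')"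
proof -
  have mn: "0 < m" "0 < n"
    using assms(1) by (auto simp: classical_mosaic_def)
  obtain q where q: "q \<in> ends m n T"
    using assms(2) by (auto simp: one_component_def)
  let ?w = "gauss_code m n T id q"
  have "gstep ?w (map (\<lambda>(c, ov, s). (row_label n c, ov, s)) ?w)"
    by (rule gstep.relabel, rule inj_on_subset[OF inj_row_label[OF mn(2)]]) simp
  then have "gauss_equiv ?w (gauss_code 1 (row_length m n) (row_tiles m n T) (row_pairing m n) (row_port n q))"
    unfolding gauss_equiv_def gauss_code_row_port[OF assms(1) q] by auto
  moreover have "row_port n q \<in> ends 1 (row_length m n) (row_tiles m n T)"
    unfolding ends_row_tiles using q by blast
  ultimately show ?thesis
    using row_mosaic_virtual[OF assms(1)] row_mosaic_one_component[OF assms] row_mosaic_genus[OF mn(1)] q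
    unfolding gauss_codes_def by blast
qed

end
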